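(* Let $\lambda$ be a nonzero real number and let $r\ge 1$ be an integer. Then, as formal power series in $t$, $$-\frac{\log_{\lambda}(1-t)}{(1-t)^{r}}=\sum_{n=1}^{\infty}H_{n,\lambda}^{(r)}t^{n},$$ and $H_{0,\lambda}^{(r)}=0$.
   Context: For real $x$ and integer $k\ge0$: $(x)_{0,\lambda}=1$, $(x)_{k,\lambda}=x(x-\lambda)(x-2\lambda)\cdots(x-(k-1)\lambda)$ for $k\ge1$ (so $(1)_{k,1/\lambda}$ denotes this product with step $1/\lambda$). The degenerate logarithm is the formal power series $\log_{\lambda}(1+t)=\sum_{k=1}^{\infty}\lambda^{k-1}(1)_{k,1/\lambda}\frac{t^{k}}{k!}$ (equivalently $\log_\lambda(1+t)=((1+t)^\lambda-1)/\lambda$); it is the compositional inverse of the degenerate exponential $e_\lambda(t)=\sum_{k\ge0}(1)_{k,\lambda}t^k/k!=(1+\lambda t)^{1/\lambda}$. The degenerate harmonic numbers are $H_{0,\lambda}=0$ and $H_{n,\lambda}=\sum_{k=1}^{n}\frac{1}{\lambda}\binom{\lambda}{k}(-1)^{k-1}$ for $n\ge1$. The degenerate hyperharmonic numbers are defined by $H_{n,\lambda}^{(1)}=H_{n,\lambda}$ and $H_{n,\lambda}^{(r)}=\sum_{k=1}^{n}H_{k,\lambda}^{(r-1)}$ for $r\ge2$ (so $H^{(r)}_{0,\lambda}$ is an empty sum for $r\ge 2$). *)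

theory Defs
  imports Complex_Main "HOL-Computational_Algebra.Formal_Power_Series"
begin

definition deg_fall :: "real \<Rightarrow> nat \<Rightarrow> real \<Rightarrow> real" where
  "deg_fall x k l = (\<Prod>i<k. x - real i * l)"

text \<open>Degenerate logarithm log_l(1+t) as a formal power series.\<close>
definition dlog :: "real \<Rightarrow> real fps" where
  "dlog l = Abs_fps (\<lambda>k. if k = 0 then 0
                          else l ^ (k - 1) * deg_fall 1 k (1 / l) / fact k)"

definition dharm :: "nat \<Rightarrow> real \<Rightarrow> real" where
  "dharm n l = (\<Sum>k=1..n. (1 / l) * (l gchoose k) * (-1) ^ (k - 1))"

text \<open>Degenerate hyperharmonic numbers H^{(r)}_{n,l}, r >= 1 (r = 0 is a dummy case).\<close>
fun dhyper :: "nat \<Rightarrow> nat \<Rightarrow> real \<Rightarrow> real" where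
  "dhyper 0 n l = dharm n l"
| "dhyper (Suc 0) n l = dharm n l"
| "dhyper (Suc (Suc r)) n l = (\<Sum>k=1..n. dhyper (Suc r) k l)"

end

theory Submission
  imports Defs
begin

text \<open>The coefficients of -log_l(1 - t) are exactly the summands (1/l) (l choose k) (-1)^(k-1)
  of the degenerate harmonic numbers. Dividing a power series by 1 - t replaces its coefficients
  by their partial sums, so one division yields H_(n,l), and every further division is one step
  of the recursion defining the hyperharmonic numbers H^(r)_(n,l).\<close>

lemma dlog_eq_gbinomial:
  fixes l :: real
  assumes "l \<noteq> 0"
  shows "dlog l = Abs_fps (\<lambda>k. if k = 0 then 0 else (1 / l) * (l gchoose k))"
proof (rule fps_ext)
  fix k :: nat
  show "fps_nth (dlog l) k = fps_nth (Abs_fps (\<lambda>k. if k = 0 then 0 else (1 / l) * (l gchoose k))) k"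
  proof (cases k)
    case (Suc m)
    have "l * (l ^ m * deg_fall 1 k (1 / l)) = (\<Prod>i<k. l) * (\<Prod>i<k. 1 - real i * (1 / l))"
      by (simp add: Suc deg_fall_def)
    also have "\<dots> = (\<Prod>i<k. l - real i)"
      unfolding prod.distrib[symmetric] using assms
      by (intro prod.cong) (auto simp: right_diff_distrib)
    also have "\<dots> = fact k * (l gchoose k)"
      by (simp add: gbinomial_prod_rev atLeast0LessThan)
    finally have "l ^ m * deg_fall 1 k (1 / l) / fact k = (1 / l) * (l gchoose k)"
      using assms by (simp add: field_simps)
    then show ?thesis by (simp add: dlog_def Suc)
  qed (simp add: dlog_def)
qed

lemma neg_dlog_neg_X:
  fixes l :: real
  assumes "l \<noteq> 0"
  shows "- (dlog l oo - fps_X)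
           = Abs_fps (\<lambda>k. if k = 0 then 0 else (1 / l) * (l gchoose k) * (-1) ^ (k - 1))"
proof (rule fps_ext)
  fix k :: nat
  have "(-1 :: real) ^ k = - ((-1) ^ (k - 1))" if "k \<noteq> 0"
    using that by (cases k) auto
  then show "fps_nth (- (dlog l oo - fps_X)) k
      = fps_nth (Abs_fps (\<lambda>k. if k = 0 then 0 else (1 / l) * (l gchoose k) * (-1) ^ (k - 1))) k"
    by (simp add: fps_compose_uminus' dlog_eq_gbinomial[OF assms])
qed

lemma neg_dlog_neg_X_div_one_minus_X:
  fixes l :: real
  assumes "l \<noteq> 0"
  shows "- (dlog l oo - fps_X) / (1 - fps_X) = Abs_fps (\<lambda>n. dharm n l)"
  unfolding fps_divide_fps_X_minus1_sum neg_dlog_neg_X[OF assms]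
  by (simp add: dharm_def fps_eq_iff sum.atLeast_Suc_atMost if_distrib cong: if_cong)

lemma dhyper_0 [simp]: "dhyper r 0 l = 0"
proof (cases r)
  case (Suc s)
  then show ?thesis by (cases s) (simp_all add: dharm_def)
qed (simp add: dharm_def)

lemma dhyper_Suc:
  assumes "r \<ge> 1"
  shows "dhyper (Suc r) n l = (\<Sum>k=0..n. dhyper r k l)"
proof -
  obtain s where "r = Suc s" using assms by (cases r) auto
  then show ?thesis by (simp add: sum.atLeast_Suc_atMost)
qed

lemma neg_dlog_neg_X_div_one_minus_X_power:
  fixes l :: real
  assumes "l \<noteq> 0" and "r \<ge> 1"
  shows "- (dlog l oo - fps_X) / (1 - fps_X) ^ r = Abs_fps (\<lambda>n. dhyper r n l)"
  using assms(2)
proof (induction r rule: dec_induct)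
  case base
  then show ?case by (simp add: neg_dlog_neg_X_div_one_minus_X[OF assms(1)])
next
  case (step r)
  have "- (dlog l oo - fps_X) / (1 - fps_X) ^ Suc r
      = - (dlog l oo - fps_X) / (1 - fps_X) ^ r / (1 - fps_X)"
    unfolding power_Suc by (rule fps_divide_by_mult') (simp add: subdegree_eq_0_iff)
  also have "\<dots> = Abs_fps (\<lambda>n. dhyper (Suc r) n l)"
    unfolding step.IH fps_divide_fps_X_minus1_sum by (simp add: dhyper_Suc[OF step.hyps(1)])
  finally show ?case .
qed

theorem theorem1:
  fixes l :: real and r :: nat
  assumes "l \<noteq> 0" and "r \<ge> 1"
  shows "- fps_compose (dlog l) (- fps_X) / (1 - fps_X) ^ r
           = Abs_fps (\<lambda>n. if n = 0 then 0 else dhyper r n l)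
         \<and> dhyper r 0 l = 0"
proof
  have "Abs_fps (\<lambda>n. if n = 0 then 0 else dhyper r n l) = Abs_fps (\<lambda>n. dhyper r n l)"
    by (simp add: fps_eq_iff)
  then show "- fps_compose (dlog l) (- fps_X) / (1 - fps_X) ^ r
           = Abs_fps (\<lambda>n. if n = 0 then 0 else dhyper r n l)"
    using neg_dlog_neg_X_div_one_minus_X_power[OF assms] by simp
  show "dhyper r 0 l = 0" by simp
qed

end
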